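(* Let $\gamma(s)=(X_1,\dots,X_r,Y_1,\dots,Y_r)(s)$, $s\in\mathbb R$, be a Ricci-flat trajectory (as defined in the context). Fix $s^*\in\mathbb R$ and define $t(s)=\int_{-\infty}^{s}\exp\!\big(\int_{s^*}^{\sigma}\mathcal G\big)\,d\sigma$ and $g_i(s)=\frac{\sqrt{d_i}}{Y_i(s)}\exp\!\big(\int_{s^*}^{s}\mathcal G\big)$. Then $t(s)\to+\infty$ as $s\to+\infty$; consequently the corresponding Ricci-flat metric $dt^2+g_1^2d\theta^2+\sum_{i\ge2}g_i^2h_i$ is complete.
   Context: Fix $r\ge2$, $d_1=1$, $\lambda_1=0$, and integers $d_i\ge2$ and reals $\lambda_i>0$ for $i=2,\dots,r$ (dimensions and Einstein constants of Einstein manifolds $(M_i,h_i)$); $n=\sum_i d_i$. Consider the ODE system, with $'=d/ds$ and $\mathcal G=\sum_{j=1}^rX_j^2$: $X_i'=X_i(\mathcal G-1)+\frac{\lambda_iY_i^2}{\sqrt{d_i}}$, $Y_i'=Y_i\big(\mathcal G-\frac{X_i}{\sqrt{d_i}}\big)$, $i=1,\dots,r$. Let $\mathcal L=\sum_iX_i^2+\sum_i\lambda_iY_i^2-1$, $\mathcal H=\sum_i\sqrt{d_i}X_i$, and $P_0$ the point $X_1=Y_1=1$, $X_i=Y_i=0$ ($i\ge2$). A Ricci-flat trajectory is a non-constant solution defined for all $s\in\mathbb R$ with $\gamma(s)\to P_0$ as $s\to-\infty$, contained in $\{\mathcal L=0,\mathcal H=1\}$, and with $Y_i(s)>0$ for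 all $i$ and $s$. *)

theory Defs
  imports "HOL-Analysis.Analysis"
begin

text \<open>Indices i range over {1..r}. A state is given by two functions
  X, Y :: real \<Rightarrow> nat \<Rightarrow> real (time s, index i); values at indices outside
  {1..r} are irrelevant.\<close>

definition GG :: "nat \<Rightarrow> (real \<Rightarrow> nat \<Rightarrow> real) \<Rightarrow> real \<Rightarrow> real" where
  "GG r X s = (\<Sum>j=1..r. (X s j)^2)"

definition ricci_flat_trajectory ::
  "nat \<Rightarrow> (nat \<Rightarrow> nat) \<Rightarrow> (nat \<Rightarrow> real) \<Rightarrow> (real \<Rightarrow> nat \<Rightarrow> real) \<Rightarrow> (real \<Rightarrow> nat \<Rightarrow> real) \<Rightarrow> bool"
where
  "ricci_flat_trajectory r d lam X Y \<longleftrightarrow>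
     \<comment> \<open>solution of the ODE system on all of R\<close>
     (\<forall>s. \<forall>i\<in>{1..r}.
        ((\<lambda>u. X u i) has_real_derivative
            (X s i * (GG r X s - 1) + lam i * (Y s i)^2 / sqrt (real (d i)))) (at s) \<and>
        ((\<lambda>u. Y u i) has_real_derivative
            (Y s i * (GG r X s - X s i / sqrt (real (d i))))) (at s)) \<and>
     \<comment> \<open>non-constant\<close>
     (\<exists>s1 s2. \<exists>i\<in>{1..r}. X s1 i \<noteq> X s2 i \<or> Y s1 i \<noteq> Y s2 i) \<and>
     \<comment> \<open>tends to P0 as s \<rightarrow> -\<infinity>\<close>
     (\<forall>i\<in>{1..r}. ((\<lambda>s. X s i) \<longlongrightarrow> (if i = 1 then 1 else 0)) at_bot \<and>
                  ((\<lambda>s. Y s i) \<longlongrightarrow> (if i = 1 then 1 else 0)) at_bot) \<and>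
     \<comment> \<open>contained in {L = 0, H = 1}\<close>
     (\<forall>s. (\<Sum>i=1..r. (X s i)^2) + (\<Sum>i=1..r. lam i * (Y s i)^2) - 1 = 0) \<and>
     (\<forall>s. (\<Sum>i=1..r. sqrt (real (d i)) * X s i) = 1) \<and>
     \<comment> \<open>positivity of Y\<close>
     (\<forall>s. \<forall>i\<in>{1..r}. Y s i > 0)"

end

theory Submission
  imports Defs
begin

text \<open>Along the trajectory the constraint \<open>\<Sum> sqrt (d\<^sub>i) X\<^sub>i = 1\<close> and Cauchy-Schwarz give
  \<open>\<G> \<ge> 1/n\<close>, so \<open>F(\<sigma>) = \<integral>\<^sub>s\<^sub>*\<^sup>\<sigma> \<G>\<close> grows at least linearly with slope \<open>1/n\<close>.
  Hence \<open>exp F\<close> is dominated by a multiple of \<open>exp (\<sigma>/n)\<close> near \<open>-\<infinity>\<close>, making \<open>t(s)\<close>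
  finite, while \<open>exp F \<ge> 1\<close> for \<open>\<sigma> \<ge> s\<^sub>*\<close>, so \<open>t(s) \<ge> s - s\<^sub>*\<close>.\<close>

lemma interval_integral_has_real_derivative:
  fixes f :: "real \<Rightarrow> real" and a x :: real
  assumes cont: "\<And>x. isCont f x"
  shows "((\<lambda>y::real. LBINT u=a..y. f u) has_real_derivative f x) (at x)"
proof -
  define l u where "l = min x a - 1" and "u = max x a + 1"
  have "((\<lambda>y::real. LBINT u=a..y. f u) has_vector_derivative f x) (at x within {l..u})"
    by (rule interval_integral_FTC2)
      (auto simp: l_def u_def intro!: continuous_at_imp_continuous_on cont)
  moreover have "at x within {l..u} = at x"
    by (rule at_within_Icc_at) (auto simp: l_def u_def)
  ultimately show ?thesis
    by (simp add: has_real_derivative_iff_has_vector_derivative)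
qed

lemma set_integrable_exp_mult_at_bot:
  fixes c s :: real
  assumes "0 < c"
  shows "set_integrable lborel (einterval MInfty (ereal s)) (\<lambda>x. exp (c * x))"
proof (rule interval_integral_FTC_nonneg(1)[where F = "\<lambda>x. exp (c * x) / c" and A = 0 and B = "exp (c * s) / c"])
  show "DERIV (\<lambda>x. exp (c * x) / c) x :> exp (c * x)" for x
    using assms by (auto intro!: derivative_eq_intros)
  have "filterlim (\<lambda>x. c * x) at_bot at_bot"
    by (rule filterlim_tendsto_pos_mult_at_bot[OF tendsto_const assms filterlim_ident])
  then have "((\<lambda>x. exp (c * x)) \<longlongrightarrow> 0) at_bot"
    by (rule filterlim_compose[OF exp_at_bot])
  then have "((\<lambda>x. exp (c * x) / c) \<longlongrightarrow> 0) at_bot"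
    using tendsto_divide[OF _ tendsto_const[of c]] assms by fastforce
  then show "(((\<lambda>x. exp (c * x) / c) \<circ> real_of_ereal) \<longlongrightarrow> 0) (at_right MInfty)"
    by (simp add: ereal_tendsto_simps)
  show "(((\<lambda>x. exp (c * x) / c) \<circ> real_of_ereal) \<longlongrightarrow> exp (c * s) / c) (at_left (ereal s))"
    unfolding ereal_tendsto_simps using assms by (auto intro!: tendsto_eq_intros)
qed (auto simp del: ereal_less_eq)

lemma integrable_exp_at_bot_of_deriv_ge:
  fixes F F' :: "real \<Rightarrow> real" and c s :: real
  assumes F: "\<And>x. (F has_real_derivative F' x) (at x)"
    and F'_ge: "\<And>x. c \<le> F' x" and "0 < c"
  shows "interval_lebesgue_integrable lborel MInfty (ereal s) (\<lambda>x. exp (F x))"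
proof -
  have linear_growth: "F x - c * x \<le> F y - c * y" if "x \<le> y" for x y
  proof (rule DERIV_nonneg_imp_nondecreasing[OF that])
    fix z
    have "((\<lambda>x. F x - c * x) has_real_derivative F' z - c) (at z)"
      by (auto intro!: derivative_eq_intros F)
    then show "\<exists>y. ((\<lambda>x. F x - c * x) has_real_derivative y) (at z) \<and> 0 \<le> y"
      using F'_ge[of z] by auto
  qed
  have "continuous_on UNIV F"
    using F DERIV_isCont by (blast intro: continuous_at_imp_continuous_on)
  then have exp_F_measurable [measurable]: "(\<lambda>x. exp (F x)) \<in> borel_measurable borel"
    by (intro borel_measurable_continuous_onI continuous_on_exp)
  define M where "M = exp (F s - c * s)"
  have "set_integrable lborel (einterval MInfty (ereal s)) (\<lambda>x. M * exp (c * x))"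
    using set_integrable_exp_mult_at_bot[OF \<open>0 < c\<close>] by simp
  then have "set_integrable lborel (einterval MInfty (ereal s)) (\<lambda>x. exp (F x))"
  proof (rule set_integrable_bound)
    show "set_borel_measurable lborel (einterval MInfty (ereal s)) (\<lambda>x. exp (F x))"
      unfolding set_borel_measurable_def by measurable
    show "AE x in lborel. x \<in> einterval MInfty (ereal s) \<longrightarrow> norm (exp (F x)) \<le> norm (M * exp (c * x))"
    proof (intro AE_I2 impI)
      fix x assume "x \<in> einterval MInfty (ereal s)"
      then have "F x - c * x \<le> F s - c * s"
        by (intro linear_growth) (auto simp: einterval_def)
      then show "norm (exp (F x)) \<le> norm (M * exp (c * x))"
        unfolding M_def by (simp flip: exp_add)
    qed
  qed
  then show ?thesis
    by (simp add: interval_lebesgue_integrable_def)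
qed

lemma integral_at_bot_tendsto_at_top:
  fixes g :: "real \<Rightarrow> real" and a m :: real
  assumes integrable: "\<And>s. interval_lebesgue_integrable lborel MInfty (ereal s) g"
    and nonneg: "\<And>x. 0 \<le> g x" and ge_m: "\<And>x. a \<le> x \<Longrightarrow> m \<le> g x" and "0 < m"
  shows "filterlim (\<lambda>s. LBINT x=MInfty..ereal s. g x) at_top at_top"
proof (rule filterlim_at_top_mono)
  show "filterlim (\<lambda>s. m * (s - a)) at_top at_top"
    by (rule filterlim_tendsto_pos_mult_at_top[OF tendsto_const \<open>0 < m\<close>])
      (rule filterlim_tendsto_add_at_top[OF tendsto_const filterlim_ident, of "- a", simplified])
  have linear_lower_bound: "m * (s - a) \<le> (LBINT x=MInfty..ereal s. g x)" if "a \<le> s" for s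
  proof -
    have int_s: "set_integrable lborel (einterval MInfty (ereal s)) g"
      using integrable by (simp add: interval_lebesgue_integrable_def)
    have "(LBINT x=MInfty..ereal a. g x) + (LBINT x=ereal a..ereal s. g x)
        = (LBINT x=MInfty..ereal s. g x)"
      by (rule interval_integral_sum) (use that integrable in \<open>auto simp: min_def max_def\<close>)
    moreover have "0 \<le> (LBINT x=MInfty..ereal a. g x)"
      unfolding interval_lebesgue_integral_def set_lebesgue_integral_def
      by (auto intro!: integral_nonneg_AE simp: nonneg)
    moreover have "(LINT x:einterval a s|lborel. m) \<le> (LINT x:einterval a s|lborel. g x)"
    proof (rule set_integral_mono)
      show "set_integrable lborel (einterval a s) (\<lambda>x. m)"
        using interval_integral_const(1)[of a s m] that
        by (simp add: interval_lebesgue_integrable_def)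
      show "set_integrable lborel (einterval a s) g"
        by (rule set_integrable_subset[OF int_s]) (auto simp: einterval_def)
    qed (auto simp: einterval_def intro: ge_m)
    ultimately show ?thesis
      using interval_integral_const(2)[of a s m] that
      by (simp add: interval_lebesgue_integral_def algebra_simps)
  qed
  show "\<forall>\<^sub>F s in at_top. m * (s - a) \<le> (LBINT x=MInfty..ereal s. g x)"
    using eventually_ge_at_top[of a] by eventually_elim (rule linear_lower_bound)
qed

lemma exp_primitive_integral_at_bot:
  fixes f :: "real \<Rightarrow> real" and a c :: real
  assumes cont: "\<And>x. isCont f x" and f_ge: "\<And>x. c \<le> f x" and "0 < c"
  shows "\<forall>s. interval_lebesgue_integrable lborel MInfty (ereal s)
               (\<lambda>\<sigma>. exp (LBINT u=a..\<sigma>. f u))"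
    and "filterlim (\<lambda>s. LBINT \<sigma>=MInfty..ereal s. exp (LBINT u=a..\<sigma>. f u)) at_top at_top"
proof -
  define F where "F \<sigma> = (LBINT u=a..\<sigma>. f u)" for \<sigma> :: real
  have F': "(F has_real_derivative f x) (at x)" for x
    unfolding F_def by (rule interval_integral_has_real_derivative[OF cont])
  have integrable: "interval_lebesgue_integrable lborel MInfty (ereal s) (\<lambda>\<sigma>. exp (F \<sigma>))" for s
    by (rule integrable_exp_at_bot_of_deriv_ge[OF F' f_ge \<open>0 < c\<close>])
  have "0 \<le> F x" if "a \<le> x" for x
  proof -
    have "F a \<le> F x"
    proof (rule DERIV_nonneg_imp_nondecreasing[OF that])
      show "\<exists>y. (F has_real_derivative y) (at z) \<and> 0 \<le> y" for z
        using F'[of z] f_ge[of z] \<open>0 < c\<close> by auto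
    qed
    then show ?thesis
      by (simp add: F_def)
  qed
  then have "filterlim (\<lambda>s. LBINT \<sigma>=MInfty..ereal s. exp (F \<sigma>)) at_top at_top"
    by (intro integral_at_bot_tendsto_at_top[where a = a and m = 1] integrable) auto
  with integrable show "\<forall>s. interval_lebesgue_integrable lborel MInfty (ereal s)
               (\<lambda>\<sigma>. exp (LBINT u=a..\<sigma>. f u))"
    and "filterlim (\<lambda>s. LBINT \<sigma>=MInfty..ereal s. exp (LBINT u=a..\<sigma>. f u)) at_top at_top"
    by (simp_all add: F_def)
qed

lemma ricci_flat_trajectory_isCont_GG:
  assumes "ricci_flat_trajectory r d lam X Y"
  shows "isCont (GG r X) s"
proof -
  have "isCont (\<lambda>u. X u i) s" if "i \<in> {1..r}" for i
    using assms that DERIV_isCont unfolding ricci_flat_trajectory_def by blast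
  then show ?thesis
    unfolding GG_def by (intro continuous_intros) auto
qed

lemma ricci_flat_trajectory_GG_lower_bound:
  assumes "ricci_flat_trajectory r d lam X Y"
  shows "1 \<le> (\<Sum>i=1..r. real (d i)) * GG r X s"
proof -
  have "1 = (\<Sum>i=1..r. sqrt (real (d i)) * X s i)\<^sup>2"
    using assms by (simp add: ricci_flat_trajectory_def)
  also have "\<dots> \<le> (\<Sum>i=1..r. (sqrt (real (d i)))\<^sup>2) * (\<Sum>i=1..r. (X s i)\<^sup>2)"
    by (rule Cauchy_Schwarz_ineq_sum)
  finally show ?thesis
    by (simp add: GG_def)
qed

text \<open>Only the constraint \<open>\<H> = 1\<close> and the continuity of \<open>\<G>\<close> enter.\<close>

theorem lemma4p1:
  fixes r :: nat and d :: "nat \<Rightarrow> nat" and lam :: "nat \<Rightarrow> real"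
    and X Y :: "real \<Rightarrow> nat \<Rightarrow> real" and s_star :: real
  assumes "r \<ge> 2" and "d 1 = 1" and "lam 1 = 0"
    and "\<forall>i\<in>{2..r}. d i \<ge> 2 \<and> lam i > 0"
    and "ricci_flat_trajectory r d lam X Y"
  shows "(\<forall>s. interval_lebesgue_integrable lborel MInfty (ereal s)
                (\<lambda>\<sigma>. exp (LBINT u=s_star..\<sigma>. GG r X u)))
         \<and> filterlim (\<lambda>s. LBINT \<sigma>=MInfty..(ereal s). exp (LBINT u=s_star..\<sigma>. GG r X u))
                     at_top at_top"
proof -
  define n where "n = (\<Sum>i=1..r. real (d i))"
  have bound: "1 \<le> n * GG r X s" for s
    unfolding n_def by (rule ricci_flat_trajectory_GG_lower_bound[OF assms(5)])
  have "0 \<le> n"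
    by (simp add: n_def sum_nonneg)
  with bound[of 0] have "0 < n"
    by (cases "n = 0") auto
  then have "1 / n \<le> GG r X s" for s
    using bound[of s] by (simp add: field_simps mult.commute)
  from exp_primitive_integral_at_bot[OF ricci_flat_trajectory_isCont_GG[OF assms(5)] this]
  show ?thesis
    using \<open>0 < n\<close> by simp
qed

end
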